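(* Let $A$ be a Banach algebra, $f\in A^*$ and $a,b\in A$. Let $L_a,R_a:A\to A$ be $L_ax=ax$, $R_ax=xa$. (a) If $f\in\mathrm{wpL}(A)$ and $L_a$ is weakly precompact, then $fa\in\mathrm{rcc}(A)$; if $f\in\mathrm{wpL}(A)$ and $R_a$ is weakly precompact, then $af\in\mathrm{lcc}(A)$. (b) If $f\in\mathrm{lcc}(A)$ and $L_a$ is weakly precompact, then $fa\in\mathrm{ap}(A)$; if $f\in\mathrm{rcc}(A)$ and $R_a$ is weakly precompact, then $af\in\mathrm{ap}(A)$. (c) If $f\in\mathrm{wpL}(A)$ and $L_a$, $R_b$ are weakly precompact, then $bfa\in\mathrm{ap}(A)$ (where $bfa=b(fa)$, i.e. $bfa(x)=f(axb)$).
   Context: For a Banach algebra $A$, $f\in A^*$ and $a\in A$, define $fa,af\in A^*$ by $fa(x)=f(ax)$ and $af(x)=f(xa)$. The operators $T_f,S_f:A\to A^*$ are $T_f(a)=fa$, $S_f(a)=af$. A set $E\subseteq A^*$ is an L-set if for every weakly null sequence $(x_n)$ in $A$, $\lim_n\sup_{g\in E}|g(x_n)|=0$. A set is weakly precompact if every sequence in it has a weakly Cauchy subsequence; an operator is weakly precompact if it maps bounded sets to weakly precompact sets. $\mathrm{wpL}(A)$ is the set of $f\in A^*$ such that $T_f$ maps weakly precompact sets onto L-sets; $\mathrm{lcc}(A)$ (resp. $\mathrm{rcc}(A)$) is the set of $f$ such that $T_f$ (resp. $S_f$) is completely continuous (maps weakly null sequences to norm null sequences); $\mathrm{ap}(A)$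 is the set of $f$ such that $T_f$ is a compact operator. *)

theory Defs
  imports "HOL-Analysis.Analysis"
begin

(* The dual space A* is modelled as the type of bounded linear functionals
   'a =>L real (blinfun) with its operator norm. *)

definition weakly_null :: "(nat \<Rightarrow> 'a::real_normed_vector) \<Rightarrow> bool" where
  "weakly_null x \<longleftrightarrow> (\<forall>g :: 'a \<Rightarrow>\<^sub>L real. (\<lambda>n. blinfun_apply g (x n)) \<longlonglongrightarrow> 0)"

definition weakly_cauchy :: "(nat \<Rightarrow> 'a::real_normed_vector) \<Rightarrow> bool" where
  "weakly_cauchy x \<longleftrightarrow> (\<forall>g :: 'a \<Rightarrow>\<^sub>L real. Cauchy (\<lambda>n. blinfun_apply g (x n)))"

definition weakly_precompact :: "'a::real_normed_vector set \<Rightarrow> bool" where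
  "weakly_precompact S \<longleftrightarrow>
     (\<forall>x::nat\<Rightarrow>'a. (\<forall>n. x n \<in> S) \<longrightarrow> (\<exists>r::nat\<Rightarrow>nat. strict_mono r \<and> weakly_cauchy (x \<circ> r)))"

definition wp_operator :: "('a::real_normed_vector \<Rightarrow> 'b::real_normed_vector) \<Rightarrow> bool" where
  "wp_operator T \<longleftrightarrow> (\<forall>S. bounded S \<longrightarrow> weakly_precompact (T ` S))"

definition L_set :: "('a::real_normed_vector \<Rightarrow>\<^sub>L real) set \<Rightarrow> bool" where
  "L_set E \<longleftrightarrow> (\<forall>x. weakly_null x \<longrightarrow>
     (\<forall>e>0. eventually (\<lambda>n. \<forall>g\<in>E. \<bar>blinfun_apply g (x n)\<bar> \<le> e) sequentially))"

definition completely_continuous :: "('a::real_normed_vector \<Rightarrow> 'b::real_normed_vector) \<Rightarrow> bool" where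
  "completely_continuous T \<longleftrightarrow> (\<forall>x. weakly_null x \<longrightarrow> (\<lambda>n. T (x n)) \<longlonglongrightarrow> 0)"

definition compact_operator :: "('a::real_normed_vector \<Rightarrow> 'b::real_normed_vector) \<Rightarrow> bool" where
  "compact_operator T \<longleftrightarrow> (\<forall>S. bounded S \<longrightarrow> compact (closure (T ` S)))"

text \<open>fa(x) = f(ax) and af(x) = f(xa).\<close>
definition lmul :: "('a::real_normed_algebra \<Rightarrow>\<^sub>L real) \<Rightarrow> 'a \<Rightarrow> ('a \<Rightarrow>\<^sub>L real)" where
  "lmul f a = Blinfun (\<lambda>x. blinfun_apply f (a * x))"

definition rmul :: "'a::real_normed_algebra \<Rightarrow> ('a \<Rightarrow>\<^sub>L real) \<Rightarrow> ('a \<Rightarrow>\<^sub>L real)" where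
  "rmul a f = Blinfun (\<lambda>x. blinfun_apply f (x * a))"

definition T_op :: "('a::real_normed_algebra \<Rightarrow>\<^sub>L real) \<Rightarrow> 'a \<Rightarrow> ('a \<Rightarrow>\<^sub>L real)" where
  "T_op f = (\<lambda>a. lmul f a)"

definition S_op :: "('a::real_normed_algebra \<Rightarrow>\<^sub>L real) \<Rightarrow> 'a \<Rightarrow> ('a \<Rightarrow>\<^sub>L real)" where
  "S_op f = (\<lambda>a. rmul a f)"

definition wpL :: "('a::real_normed_algebra \<Rightarrow>\<^sub>L real) set" where
  "wpL = {f. \<forall>S. weakly_precompact S \<longrightarrow> L_set (T_op f ` S)}"

definition lcc :: "('a::real_normed_algebra \<Rightarrow>\<^sub>L real) set" where
  "lcc = {f. completely_continuous (T_op f)}"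

definition rcc :: "('a::real_normed_algebra \<Rightarrow>\<^sub>L real) set" where
  "rcc = {f. completely_continuous (S_op f)}"

definition ap :: "('a::real_normed_algebra \<Rightarrow>\<^sub>L real) set" where
  "ap = {f. compact_operator (T_op f)}"

end

(*
  Writing L_a x = a x, the identities
    S_{fa} x = (y |-> T_f (a y) x),   T_{af} x = (y |-> T_f x (y a)) = (y |-> S_f (y a) x),
    T_{fa} = T_f o L_a
  reduce everything to three facts about functionals.

  (1) If g_n runs through an L-set and tends to 0 pointwise, then g_n tends to 0 uniformly on
  every weakly precompact set W.  Otherwise there are w_n in W with |g_{p n} w_n| > e; pass to a
  weakly Cauchy subsequence and thin it out so that g_{p (k (i+1))} is small at w_{k i}.  The
  differences w_{k (i+1)} - w_{k i} are weakly null, so the L-set is uniformly small on them: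
  a contradiction.
  (2) A completely continuous operator maps weakly Cauchy sequences to norm Cauchy sequences,
  hence weakly precompact sets to relatively compact sets.
  (3) If norm (T x) <= sup {|h x| | h in K} for a relatively compact K in A*, then T maps
  bounded sets to relatively compact sets: a diagonal subsequence of a bounded sequence
  converges on the countable union of finite nets of K, hence uniformly on K.

  Part (a) for fa uses the L-set T_f (L_a (unit ball)) directly; for af it uses (1) with
  g_n = T_f x_n, whose range is an L-set because the range of a weakly null sequence is weakly
  precompact.  Part (b) follows from (2), and from (2) and (3) combined.  Part (c) is (b)
  applied to fa, which lies in rcc by (a).
*)

theory Submission
  imports Defs "HOL-Complex_Analysis.Great_Picard"
begin

lemma lmul_apply [simp]: "blinfun_apply (lmul f a) x = blinfun_apply f (a * x)"
proof -
  have "bounded_linear (\<lambda>x. blinfun_apply f (a * x))"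
    by (intro bounded_linear_compose[OF blinfun.bounded_linear_right bounded_linear_mult_right])
  then show ?thesis
    unfolding lmul_def by (simp add: bounded_linear_Blinfun_apply)
qed

lemma rmul_apply [simp]: "blinfun_apply (rmul a f) x = blinfun_apply f (x * a)"
proof -
  have "bounded_linear (\<lambda>x. blinfun_apply f (x * a))"
    by (intro bounded_linear_compose[OF blinfun.bounded_linear_right bounded_linear_mult_left])
  then show ?thesis
    unfolding rmul_def by (simp add: bounded_linear_Blinfun_apply)
qed

lemma lmul_lmul: "lmul (lmul f a) x = lmul f (a * x)"
  by (rule blinfun_eqI) (simp add: mult.assoc)

lemma linear_T_op: "linear (T_op f)"
  by (rule linearI; rule blinfun_eqI)
    (simp_all add: T_op_def distrib_right blinfun.add_left blinfun.add_right
      blinfun.scaleR_left blinfun.scaleR_right)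

lemma linear_S_op: "linear (S_op f)"
  by (rule linearI; rule blinfun_eqI)
    (simp_all add: S_op_def distrib_left blinfun.add_left blinfun.add_right
      blinfun.scaleR_left blinfun.scaleR_right)

lemma norm_blinfun_le_if_bounded_on_unit_ball:
  fixes g :: "'a::real_normed_vector \<Rightarrow>\<^sub>L 'b::real_normed_vector"
  assumes "0 \<le> e" and unit_ball: "\<And>y. norm y \<le> 1 \<Longrightarrow> norm (g y) \<le> e"
  shows "norm g \<le> e"
proof (rule norm_blinfun_bound[OF \<open>0 \<le> e\<close>])
  fix y :: 'a
  show "norm (g y) \<le> e * norm y"
  proof (cases "y = 0")
    case False
    have "norm (g (y /\<^sub>R norm y)) \<le> e"
      using False by (intro unit_ball) simp
    then show ?thesis
      using False by (simp add: blinfun.scaleR_right field_simps)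
  qed simp
qed

lemma tendsto_zero_if_eventually_norm_le:
  fixes X :: "'b \<Rightarrow> 'a::real_normed_vector"
  assumes "\<And>e. 0 < e \<Longrightarrow> eventually (\<lambda>n. norm (X n) \<le> e) F"
  shows "(X \<longlongrightarrow> 0) F"
proof (rule tendstoI)
  fix e :: real
  assume "0 < e"
  with assms[of "e / 2"] show "eventually (\<lambda>n. dist (X n) 0 < e) F"
    by (auto elim: eventually_mono)
qed

lemma strict_mono_chainE:
  assumes "\<And>j. eventually (P j) sequentially"
  obtains k :: "nat \<Rightarrow> nat" where "strict_mono k" "\<And>i. P (k i) (k (Suc i))"
proof -
  have "\<exists>k'. k < k' \<and> P k k'" for k
    using assms[of k] eventually_ge_at_top[of "Suc k"]
    by (metis (mono_tags) Suc_le_lessD eventually_conj eventually_sequentially order_refl)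
  then have "\<exists>k. \<forall>i. True \<and> k i < k (Suc i) \<and> P (k i) (k (Suc i))"
    by (intro dependent_nat_choice) auto
  then show ?thesis
    using that unfolding strict_mono_Suc_iff by blast
qed

lemma compact_closure_image_if_Cauchy_subsequences:
  fixes T :: "'a \<Rightarrow> 'b::complete_space"
  assumes "\<And>x :: nat \<Rightarrow> 'a. range x \<subseteq> S \<Longrightarrow> \<exists>r. strict_mono r \<and> Cauchy (\<lambda>n. T (x (r n)))"
  shows "compact (closure (T ` S))"
proof -
  have "Met_TC.mtotally_bounded (T ` S)"
    unfolding Met_TC.mtotally_bounded_sequentially
  proof (intro conjI allI impI)
    fix \<sigma> :: "nat \<Rightarrow> 'b"
    assume "range \<sigma> \<subseteq> T ` S"
    then have "\<forall>n. \<exists>v. v \<in> S \<and> \<sigma> n = T v"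
      by blast
    then obtain x where x: "\<And>n. x n \<in> S" "\<And>n. \<sigma> n = T (x n)"
      by metis
    then have "range x \<subseteq> S"
      by auto
    then obtain r where "strict_mono r" "Cauchy (\<lambda>n. T (x (r n)))"
      using assms by blast
    then show "\<exists>r. strict_mono r \<and> Met_TC.MCauchy (\<sigma> \<circ> r)"
      by (intro exI[of _ r]) (simp add: x(2) comp_def)
  qed simp
  then show ?thesis
    using Met_TC.mtotally_bounded_eq_compact_closure_of[of "T ` S"] complete_UNIV by simp
qed

lemma uniformly_Cauchy_finite_family:
  fixes X :: "'i \<Rightarrow> nat \<Rightarrow> 'a::metric_space"
  assumes "finite I" "\<And>i. i \<in> I \<Longrightarrow> Cauchy (X i)" "0 < e"
  obtains N where "\<And>i m n. i \<in> I \<Longrightarrow> N \<le> m \<Longrightarrow> N \<le> n \<Longrightarrow> dist (X i m) (X i n) < e"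
proof -
  have "eventually (\<lambda>N. \<forall>m\<ge>N. \<forall>n\<ge>N. dist (X i m) (X i n) < e) sequentially" if i: "i \<in> I" for i
  proof -
    obtain N0 where "\<forall>m\<ge>N0. \<forall>n\<ge>N0. dist (X i m) (X i n) < e"
      using metric_CauchyD[OF assms(2)[OF i] assms(3)] by blast
    then show ?thesis
      by (intro eventually_sequentiallyI[of N0]) simp
  qed
  then have "eventually (\<lambda>N. \<forall>i\<in>I. \<forall>m\<ge>N. \<forall>n\<ge>N. dist (X i m) (X i n) < e) sequentially"
    by (intro eventually_ball_finite assms(1) ballI)
  then show thesis
    using that unfolding eventually_sequentially by blast
qed

lemma abs_blinfun_le_dist:
  fixes g h :: "'a::real_normed_vector \<Rightarrow>\<^sub>L real"
  shows "\<bar>h z\<bar> \<le> \<bar>g z\<bar> + dist g h * norm z"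
proof -
  have "h z = g z + (h - g) z"
    by (simp add: blinfun.diff_left)
  moreover have "\<bar>(h - g) z\<bar> \<le> dist g h * norm z"
    using norm_blinfun[of "h - g" z] by (simp add: dist_norm norm_minus_commute)
  ultimately show ?thesis
    by linarith
qed

lemma weakly_null_imp_weakly_cauchy: "weakly_null x \<Longrightarrow> weakly_cauchy x"
  unfolding weakly_null_def weakly_cauchy_def using LIMSEQ_imp_Cauchy by blast

lemma weakly_null_diff_weakly_cauchy:
  assumes "weakly_cauchy w"
    and "filterlim p sequentially sequentially" "filterlim q sequentially sequentially"
  shows "weakly_null (\<lambda>n. w (p n) - w (q n))"
  unfolding weakly_null_def
proof
  fix g :: "'a \<Rightarrow>\<^sub>L real"
  obtain l where "(\<lambda>n. g (w n)) \<longlonglongrightarrow> l"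
    using assms(1) unfolding weakly_cauchy_def Cauchy_convergent_iff convergent_def by blast
  from tendsto_diff[OF filterlim_compose[OF this assms(2)] filterlim_compose[OF this assms(3)]]
  show "(\<lambda>n. g (w (p n) - w (q n))) \<longlonglongrightarrow> 0"
    by (simp add: blinfun.diff_right)
qed

lemma weakly_precompact_range_weakly_null:
  assumes "weakly_null x"
  shows "weakly_precompact (range x)"
  unfolding weakly_precompact_def
proof (intro allI impI)
  fix s :: "nat \<Rightarrow> 'a"
  assume "\<forall>n. s n \<in> range x"
  then have "\<forall>n. \<exists>m. s n = x m"
    by blast
  then obtain \<phi> where \<phi>: "\<And>n. s n = x (\<phi> n)"
    by metis
  show "\<exists>r. strict_mono r \<and> weakly_cauchy (s \<circ> r)"
  proof (cases "\<exists>m. infinite {n. \<phi> n = m}")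
    case True
    then obtain m where inf: "infinite {n. \<phi> n = m}"
      by blast
    have "s \<circ> enumerate {n. \<phi> n = m} = (\<lambda>_. x m)"
      using enumerate_in_set[OF inf] \<phi> by auto
    moreover have "weakly_cauchy (\<lambda>_. x m)"
      unfolding weakly_cauchy_def by (simp add: Cauchy_convergent_iff convergent_const)
    ultimately show ?thesis
      using strict_mono_enumerate[OF inf] by metis
  next
    case False
    have "filterlim \<phi> sequentially sequentially"
      unfolding filterlim_at_top
    proof
      fix Z :: nat
      have "{n. \<phi> n < Z} = (\<Union>m<Z. {n. \<phi> n = m})"
        by auto
      then have "finite {n. \<phi> n < Z}"
        using False by simp
      then show "eventually (\<lambda>n. Z \<le> \<phi> n) sequentially"
        by (simp add: not_le[symmetric] cofinite_eq_sequentially[symmetric] eventually_cofinite)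
    qed
    then have "weakly_null s"
      using assms unfolding weakly_null_def \<phi> by (auto intro: filterlim_compose)
    then show ?thesis
      using strict_mono_id weakly_null_imp_weakly_cauchy by (metis comp_id)
  qed
qed

lemma completely_continuous_Cauchy:
  assumes "completely_continuous T" "linear T" "weakly_cauchy w"
  shows "Cauchy (\<lambda>n. T (w n))"
proof (rule ccontr)
  assume "\<not> Cauchy (\<lambda>n. T (w n))"
  then obtain e where "0 < e" and "\<forall>N. \<exists>m\<ge>N. \<exists>n\<ge>N. e \<le> dist (T (w m)) (T (w n))"
    unfolding Cauchy_def by (auto simp: not_less)
  then obtain p q where pq: "\<And>N. N \<le> p N" "\<And>N. N \<le> q N"
    and far: "\<And>N. e \<le> norm (T (w (p N) - w (q N)))"
    by (metis dist_norm linear_diff[OF \<open>linear T\<close>])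
  have "filterlim p sequentially sequentially" "filterlim q sequentially sequentially"
    using pq by (auto intro: filterlim_at_top_mono[OF filterlim_ident])
  then have "weakly_null (\<lambda>N. w (p N) - w (q N))"
    using weakly_null_diff_weakly_cauchy \<open>weakly_cauchy w\<close> by blast
  then have "(\<lambda>N. T (w (p N) - w (q N))) \<longlonglongrightarrow> 0"
    using \<open>completely_continuous T\<close> unfolding completely_continuous_def by blast
  then obtain N where "\<forall>n\<ge>N. norm (T (w (p n) - w (q n)) - 0) < e"
    using LIMSEQ_D \<open>0 < e\<close> by blast
  then have "norm (T (w (p N) - w (q N))) < e"
    by simp
  with far[of N] show False
    by simp
qed

lemma completely_continuous_compact_closure_image:
  fixes T :: "'a::real_normed_vector \<Rightarrow> 'b::banach"
  assumes "completely_continuous T" "linear T" "weakly_precompact W"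
  shows "compact (closure (T ` W))"
proof (rule compact_closure_image_if_Cauchy_subsequences)
  fix w :: "nat \<Rightarrow> 'a"
  assume "range w \<subseteq> W"
  then obtain r where "strict_mono r" "weakly_cauchy (w \<circ> r)"
    using \<open>weakly_precompact W\<close> unfolding weakly_precompact_def by blast
  with completely_continuous_Cauchy[OF assms(1,2)]
  show "\<exists>r. strict_mono r \<and> Cauchy (\<lambda>n. T (w (r n)))"
    by (auto simp: comp_def)
qed

lemma L_set_uniformly_null_on_weakly_precompact:
  fixes g :: "nat \<Rightarrow> ('a::real_normed_vector \<Rightarrow>\<^sub>L real)"
  assumes L: "L_set (range g)" and null: "\<And>w. (\<lambda>n. g n w) \<longlonglongrightarrow> 0"
    and W: "weakly_precompact W" and "0 < e"
  shows "eventually (\<lambda>n. \<forall>w\<in>W. \<bar>g n w\<bar> \<le> e) sequentially"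
proof (rule ccontr)
  assume "\<not> ?thesis"
  then have "\<forall>N. \<exists>n\<ge>N. \<exists>w\<in>W. e < \<bar>g n w\<bar>"
    unfolding eventually_sequentially by (auto simp: not_le)
  then obtain p w where p: "\<And>N. N \<le> p N" and w: "\<And>N. w N \<in> W"
    and big: "\<And>N. e < \<bar>g (p N) (w N)\<bar>"
    by metis
  obtain r where r: "strict_mono r" "weakly_cauchy (w \<circ> r)"
    using W w unfolding weakly_precompact_def by blast
  define u q where "u = w \<circ> r" and "q = p \<circ> r"
  have "k \<le> q k" for k
    using p[of "r k"] seq_suble[OF r(1), of k] unfolding q_def by simp
  then have "filterlim q sequentially sequentially"
    by (intro filterlim_at_top_mono[OF filterlim_ident]) auto
  then have "eventually (\<lambda>k. \<bar>g (q k) (u j)\<bar> < e / 2) sequentially" for j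
    using tendstoD[OF null[of "u j"], of "e / 2"] \<open>0 < e\<close>
    by (auto dest: eventually_compose_filterlim)
  then obtain k where k: "strict_mono k" and small: "\<And>i. \<bar>g (q (k (Suc i))) (u (k i))\<bar> < e / 2"
    by (rule strict_mono_chainE[where P = "\<lambda>j k. \<bar>g (q k) (u j)\<bar> < e / 2"]) blast
  define d where "d i = u (k (Suc i)) - u (k i)" for i
  have "filterlim (\<lambda>i. k (Suc i)) sequentially sequentially"
    using filterlim_subseq[OF k] by (simp add: filterlim_sequentially_Suc)
  then have "weakly_null d"
    unfolding d_def using r(2) filterlim_subseq[OF k]
    by (intro weakly_null_diff_weakly_cauchy) (simp_all add: u_def comp_def)
  then obtain i where "\<forall>h\<in>range g. \<bar>h (d i)\<bar> \<le> e / 4"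
    using L \<open>0 < e\<close> unfolding L_set_def eventually_sequentially
    by (metis divide_pos_pos order_refl zero_less_numeral)
  then have "\<bar>g (q (k (Suc i))) (d i)\<bar> \<le> e / 4"
    by blast
  moreover have "g (q (k (Suc i))) (u (k (Suc i))) = g (q (k (Suc i))) (d i) + g (q (k (Suc i))) (u (k i))"
    by (simp add: d_def blinfun.diff_right)
  moreover have "e < \<bar>g (q (k (Suc i))) (u (k (Suc i)))\<bar>"
    using big by (simp add: u_def q_def)
  ultimately show False
    using small[of i] \<open>0 < e\<close> by linarith
qed

lemma Cauchy_if_dominated_by_Cauchy_nets:
  fixes x :: "nat \<Rightarrow> 'a::real_normed_vector" and T :: "'a \<Rightarrow> 'b::real_normed_vector"
    and K :: "('a \<Rightarrow>\<^sub>L real) set"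
  assumes "linear T" and M: "\<And>n. norm (x n) \<le> M"
    and dom: "\<And>z c. 0 \<le> c \<Longrightarrow> \<forall>h\<in>K. \<bar>h z\<bar> \<le> c \<Longrightarrow> norm (T z) \<le> c"
    and nets: "\<And>\<delta>. 0 < \<delta> \<Longrightarrow>
      \<exists>F. finite F \<and> K \<subseteq> (\<Union>g\<in>F. ball g \<delta>) \<and> (\<forall>g\<in>F. Cauchy (\<lambda>n. g (x n)))"
  shows "Cauchy (\<lambda>n. T (x n))"
proof (rule metric_CauchyI)
  fix e :: real
  assume "0 < e"
  have "0 \<le> M"
    using M[of 0] norm_ge_zero order_trans by blast
  define \<delta> where "\<delta> = e / (4 * (M + 1))"
  have "0 < \<delta>"
    using \<open>0 < e\<close> \<open>0 \<le> M\<close> by (simp add: \<delta>_def)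
  have \<delta>M: "\<delta> * (2 * M) \<le> e / 2"
    using \<open>0 < e\<close> \<open>0 \<le> M\<close> by (simp add: \<delta>_def field_simps)
  obtain F where F: "finite F" "K \<subseteq> (\<Union>g\<in>F. ball g \<delta>)"
    and Cauchy_F: "\<And>g. g \<in> F \<Longrightarrow> Cauchy (\<lambda>n. g (x n))"
    using nets[OF \<open>0 < \<delta>\<close>] by blast
  have "0 < e / 4"
    using \<open>0 < e\<close> by simp
  then obtain N where N: "\<And>g m n. g \<in> F \<Longrightarrow> N \<le> m \<Longrightarrow> N \<le> n \<Longrightarrow> dist (g (x m)) (g (x n)) < e / 4"
    using uniformly_Cauchy_finite_family[of F "\<lambda>(g :: 'a \<Rightarrow>\<^sub>L real) n. g (x n)", OF F(1) Cauchy_F]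
    by blast
  show "\<exists>N. \<forall>m\<ge>N. \<forall>n\<ge>N. dist (T (x m)) (T (x n)) < e"
  proof (intro exI allI impI)
    fix m n
    assume "N \<le> m" "N \<le> n"
    define z where "z = x m - x n"
    have "norm z \<le> 2 * M"
      using norm_triangle_ineq4[of "x m" "x n"] M[of m] M[of n] unfolding z_def by linarith
    have "\<bar>h z\<bar> \<le> 3 * e / 4" if h: "h \<in> K" for h
    proof -
      obtain g where "g \<in> F" "dist g h < \<delta>"
        using F(2) h by auto
      have "\<bar>h z\<bar> \<le> \<bar>g z\<bar> + dist g h * norm z"
        by (rule abs_blinfun_le_dist)
      also have "\<dots> \<le> e / 4 + \<delta> * (2 * M)"
      proof (rule add_mono)
        show "\<bar>g z\<bar> \<le> e / 4"
          using N[OF \<open>g \<in> F\<close> \<open>N \<le> m\<close> \<open>N \<le> n\<close>]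
          by (simp add: z_def blinfun.diff_right dist_real_def)
        show "dist g h * norm z \<le> \<delta> * (2 * M)"
          using \<open>dist g h < \<delta>\<close> \<open>norm z \<le> 2 * M\<close> \<open>0 < \<delta>\<close> by (intro mult_mono) auto
      qed
      finally show ?thesis
        using \<delta>M by linarith
    qed
    then have "norm (T z) \<le> 3 * e / 4"
      using \<open>0 < e\<close> by (intro dom) auto
    then show "dist (T (x m)) (T (x n)) < e"
      using \<open>0 < e\<close> by (simp add: z_def dist_norm linear_diff[OF \<open>linear T\<close>])
  qed
qed

lemma compact_closure_image_if_dominated:
  fixes K :: "('a::real_normed_vector \<Rightarrow>\<^sub>L real) set" and T :: "'a \<Rightarrow> 'b::banach"
  assumes K: "compact (closure K)" and "linear T" and "bounded S"
    and dom: "\<And>z c. 0 \<le> c \<Longrightarrow> \<forall>h\<in>K. \<bar>h z\<bar> \<le> c \<Longrightarrow> norm (T z) \<le> c"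
  shows "compact (closure (T ` S))"
proof (rule compact_closure_image_if_Cauchy_subsequences)
  fix x :: "nat \<Rightarrow> 'a"
  assume "range x \<subseteq> S"
  then obtain M where M: "\<And>n. norm (x n) \<le> M"
    using \<open>bounded S\<close> unfolding bounded_iff by blast
  obtain C where C: "\<And>g. g \<in> closure K \<Longrightarrow> norm g \<le> C"
    using compact_imp_bounded[OF K] unfolding bounded_iff by blast
  have "\<exists>F. finite F \<and> F \<subseteq> closure K \<and> closure K \<subseteq> (\<Union>g\<in>F. ball g (inverse (Suc j)))" for j
    using seq_compact_imp_totally_bounded[OF compact_imp_seq_compact[OF K]] by simp
  then obtain F where F: "\<And>j. finite (F j)" "\<And>j. F j \<subseteq> closure K"
    "\<And>j. closure K \<subseteq> (\<Union>g\<in>F j. ball g (inverse (Suc j)))"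
    by metis
  have countable_nets: "countable (\<Union>j. F j)"
    using F(1) by (simp add: countable_finite)
  have bounded_nets: "norm (g (x n)) \<le> C * M" if "g \<in> (\<Union>j. F j)" for n g
  proof -
    have "norm (g (x n)) \<le> norm g * norm (x n)"
      by (rule norm_blinfun)
    also have "\<dots> \<le> C * M"
      using that F(2) C M[of n] by (intro mult_mono) (auto intro: order_trans[OF norm_ge_zero])
    finally show ?thesis .
  qed
  obtain r where r: "strict_mono r"
    and conv: "\<And>g. g \<in> (\<Union>j. F j) \<Longrightarrow> \<exists>l. (\<lambda>n. g (x (r n))) \<longlonglongrightarrow> l"
    using function_convergent_subsequence[of _ "\<lambda>n (g :: 'a \<Rightarrow>\<^sub>L real). g (x n)",
        OF countable_nets bounded_nets]
    by blast
  have "Cauchy (\<lambda>n. T (x (r n)))"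
  proof (rule Cauchy_if_dominated_by_Cauchy_nets[OF \<open>linear T\<close> M dom])
    fix \<delta> :: real
    assume "0 < \<delta>"
    obtain j where "inverse (Suc j) < \<delta>"
      using reals_Archimedean[OF \<open>0 < \<delta>\<close>] by blast
    then have "(\<Union>g\<in>F j. ball g (inverse (Suc j))) \<subseteq> (\<Union>g\<in>F j. ball g \<delta>)"
      by (intro UN_mono subset_ball) auto
    with closure_subset F(3)[of j] have "K \<subseteq> (\<Union>g\<in>F j. ball g \<delta>)"
      by (rule order_trans[OF order_trans])
    moreover have "\<forall>g\<in>F j. Cauchy (\<lambda>n. g (x (r n)))"
      using conv by (auto intro: LIMSEQ_imp_Cauchy)
    ultimately show "\<exists>F. finite F \<and> K \<subseteq> (\<Union>g\<in>F. ball g \<delta>) \<and> (\<forall>g\<in>F. Cauchy (\<lambda>n. g (x (r n))))"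
      using F(1)[of j] by (intro exI[of _ "F j"]) simp
  qed
  with r show "\<exists>r. strict_mono r \<and> Cauchy (\<lambda>n. T (x (r n)))"
    by blast
qed

lemma lmul_in_rcc:
  fixes f :: "'a::real_normed_algebra \<Rightarrow>\<^sub>L real"
  assumes "f \<in> wpL" "wp_operator (\<lambda>x. a * x)"
  shows "lmul f a \<in> rcc"
proof -
  let ?E = "T_op f ` (\<lambda>y. a * y) ` cball 0 1"
  have "L_set ?E"
    using assms unfolding wpL_def wp_operator_def by blast
  show ?thesis
    unfolding rcc_def completely_continuous_def
  proof (intro CollectI allI impI tendsto_zero_if_eventually_norm_le)
    fix x :: "nat \<Rightarrow> 'a" and e :: real
    assume "weakly_null x" "0 < e"
    with \<open>L_set ?E\<close> have "eventually (\<lambda>n. \<forall>g\<in>?E. \<bar>g (x n)\<bar> \<le> e) sequentially"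
      unfolding L_set_def by blast
    then show "eventually (\<lambda>n. norm (S_op (lmul f a) (x n)) \<le> e) sequentially"
    proof eventually_elim
      case (elim n)
      show ?case
      proof (rule norm_blinfun_le_if_bounded_on_unit_ball)
        fix y :: 'a
        assume "norm y \<le> 1"
        then have "\<bar>T_op f (a * y) (x n)\<bar> \<le> e"
          using elim by auto
        then show "norm (S_op (lmul f a) (x n) y) \<le> e"
          by (simp add: S_op_def T_op_def mult.assoc)
      qed (use \<open>0 < e\<close> in simp)
    qed
  qed
qed

lemma rmul_in_lcc:
  fixes f :: "'a::real_normed_algebra \<Rightarrow>\<^sub>L real"
  assumes "f \<in> wpL" "wp_operator (\<lambda>x. x * a)"
  shows "rmul a f \<in> lcc"
  unfolding lcc_def completely_continuous_def
proof (intro CollectI allI impI tendsto_zero_if_eventually_norm_le)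
  fix x :: "nat \<Rightarrow> 'a" and e :: real
  assume "weakly_null x" "0 < e"
  let ?W = "(\<lambda>y. y * a) ` cball 0 1"
  have "L_set (T_op f ` range x)"
    using assms(1) weakly_precompact_range_weakly_null[OF \<open>weakly_null x\<close>]
    unfolding wpL_def by blast
  then have "L_set (range (\<lambda>n. T_op f (x n)))"
    by (simp add: image_image)
  moreover have "(\<lambda>n. T_op f (x n) w) \<longlonglongrightarrow> 0" for w
  proof -
    have "(\<lambda>n. rmul w f (x n)) \<longlonglongrightarrow> 0"
      using \<open>weakly_null x\<close> unfolding weakly_null_def by blast
    then show ?thesis
      by (simp add: T_op_def)
  qed
  moreover have "weakly_precompact ?W"
    using assms(2) unfolding wp_operator_def by simp
  ultimately have "eventually (\<lambda>n. \<forall>w\<in>?W. \<bar>T_op f (x n) w\<bar> \<le> e) sequentially"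
    using \<open>0 < e\<close> by (rule L_set_uniformly_null_on_weakly_precompact)
  then show "eventually (\<lambda>n. norm (T_op (rmul a f) (x n)) \<le> e) sequentially"
  proof eventually_elim
    case (elim n)
    show ?case
    proof (rule norm_blinfun_le_if_bounded_on_unit_ball)
      fix y :: 'a
      assume "norm y \<le> 1"
      then have "\<bar>T_op f (x n) (y * a)\<bar> \<le> e"
        using elim by auto
      then show "norm (T_op (rmul a f) (x n) y) \<le> e"
        by (simp add: T_op_def mult.assoc)
    qed (use \<open>0 < e\<close> in simp)
  qed
qed

lemma lmul_in_ap:
  fixes f :: "'a::real_normed_algebra \<Rightarrow>\<^sub>L real"
  assumes "f \<in> lcc" "wp_operator (\<lambda>x. a * x)"
  shows "lmul f a \<in> ap"
  unfolding ap_def compact_operator_def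
proof (intro CollectI allI impI)
  fix S :: "'a set"
  assume "bounded S"
  then have "compact (closure (T_op f ` (\<lambda>x. a * x) ` S))"
    using assms linear_T_op unfolding lcc_def wp_operator_def
    by (blast intro: completely_continuous_compact_closure_image)
  moreover have "T_op (lmul f a) ` S = T_op f ` (\<lambda>x. a * x) ` S"
    by (simp add: T_op_def lmul_lmul image_image)
  ultimately show "compact (closure (T_op (lmul f a) ` S))"
    by simp
qed

lemma rmul_in_ap:
  fixes f :: "'a::real_normed_algebra \<Rightarrow>\<^sub>L real"
  assumes "f \<in> rcc" "wp_operator (\<lambda>x. x * a)"
  shows "rmul a f \<in> ap"
  unfolding ap_def compact_operator_def
proof (intro CollectI allI impI)
  fix S :: "'a set"
  assume "bounded S"
  let ?K = "S_op f ` (\<lambda>y. y * a) ` cball 0 1"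
  have "compact (closure ?K)"
    using assms linear_S_op unfolding rcc_def wp_operator_def
    by (blast intro: completely_continuous_compact_closure_image)
  then show "compact (closure (T_op (rmul a f) ` S))"
  proof (rule compact_closure_image_if_dominated[OF _ linear_T_op \<open>bounded S\<close>])
    fix x :: 'a and c :: real
    assume "0 \<le> c" and dom: "\<forall>h\<in>?K. \<bar>h x\<bar> \<le> c"
    show "norm (T_op (rmul a f) x) \<le> c"
    proof (rule norm_blinfun_le_if_bounded_on_unit_ball[OF \<open>0 \<le> c\<close>])
      fix y :: 'a
      assume "norm y \<le> 1"
      then have "\<bar>S_op f (y * a) x\<bar> \<le> c"
        using dom by auto
      then show "norm (T_op (rmul a f) x y) \<le> c"
        by (simp add: S_op_def T_op_def mult.assoc)
    qed
  qed
qed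

theorem mainTheorem3:
  fixes f :: "'a::{real_normed_algebra, banach} \<Rightarrow>\<^sub>L real" and a b :: 'a
  shows "(f \<in> wpL \<and> wp_operator (\<lambda>x. a * x) \<longrightarrow> lmul f a \<in> rcc)
       \<and> (f \<in> wpL \<and> wp_operator (\<lambda>x. x * a) \<longrightarrow> rmul a f \<in> lcc)
       \<and> (f \<in> lcc \<and> wp_operator (\<lambda>x. a * x) \<longrightarrow> lmul f a \<in> ap)
       \<and> (f \<in> rcc \<and> wp_operator (\<lambda>x. x * a) \<longrightarrow> rmul a f \<in> ap)
       \<and> (f \<in> wpL \<and> wp_operator (\<lambda>x. a * x) \<and> wp_operator (\<lambda>x. x * b)
            \<longrightarrow> rmul b (lmul f a) \<in> ap)"
  using lmul_in_rcc[of f a] rmul_in_lcc[of f a] lmul_in_ap[of f a] rmul_in_ap[of f a]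
    rmul_in_ap[OF lmul_in_rcc, of f a b]
  by blast

end
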